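(* In the nondeterministic Outcome Logic instance, for every program $C$ (terminating after finitely many steps) and atomic assertions $P,Q$: \[ \not\vDash\{P\}\,C\,\{Q\} \quad\text{iff}\quad \exists\varphi.\ \varphi\Rightarrow P,\ \mathsf{sat}(\varphi),\ \text{and}\ \vDash\langle\varphi\rangle\,C\,\langle\overline{Q}\oplus\top\rangle . \]
   Context: Nondeterministic instance: powerset monad ($\mathsf{bind}(S,k)=\bigcup_{x\in S}k(x)$, $\mathsf{unit}(x)=\{x\}$, monoid $\cup,\emptyset$). Programs $C::=\mathbb{0}\mid\mathbb{1}\mid C_1;C_2\mid C_1+C_2\mid C^\star\mid c$ with semantics $[\![C]\!]\colon\Sigma\to2^\Sigma$: $[\![\mathbb{0}]\!](\sigma)=\emptyset$, $[\![\mathbb{1}]\!](\sigma)=\{\sigma\}$, sequencing by union over intermediate states, $+$ by union, $C^\star$ as the least fixed point of $f\mapsto\lambda\sigma.f^\dagger([\![C]\!](\sigma))\cup\{\sigma\}$ with $f^\dagger(S)=\bigcup_{\sigma\in S}f(\sigma)$. Atomic commands are $\mathsf{assume}\ e$ and deterministic commands such as $x:=e$ (as in the paper's guarded command languages). Atomic assertions carry a state relation $\vDash_\Sigma$ and are closed under negation $\overline{Q}$ ($\sigma\vDash_\Sigma\overline{Q}$ iff $\sigma\not\vDash_\Sigma Q$); a set $S$ satisfies atomic $P$ iff $S\neq\emptyset$ and all its elements satisfy $P$. Outcome assertions use $\top,\bot,\top^\oplus$ (satisfied only by $\emptyset$), $\land$, $\Rightarrow$ (classical) and $\oplus$ ($S\vDash\varphi\oplus\psi$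 iff $S=S_1\cup S_2$, $S_1\vDash\varphi$, $S_2\vDash\psi$). $\vDash\langle\varphi\rangle C\langle\psi\rangle$ iff $S\vDash\varphi$ implies $[\![C]\!]^\dagger(S)\vDash\psi$ for all $S$. Hoare triple: $\vDash\{P\}C\{Q\}$ iff for all $\sigma\vDash_\Sigma P$ and $\tau\in[\![C]\!](\sigma)$, $\tau\vDash_\Sigma Q$. $\varphi\Rightarrow P$ means every set satisfying $\varphi$ satisfies $P$; $\mathsf{sat}(\varphi)$ means some set satisfies $\varphi$. *)

theory Defs
  imports Main
begin

text \<open>Atomic commands of the guarded command language: assume e (e a state test)
  and deterministic commands such as x := e (a state transformer).\<close>
datatype 's atom = Assume "'s \<Rightarrow> bool" | Det "'s \<Rightarrow> 's"

datatype 's cmd =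
    Zero
  | One
  | Seq "'s cmd" "'s cmd"
  | Plus "'s cmd" "'s cmd"
  | Star "'s cmd"
  | Atm "'s atom"

fun atom_sem :: "'s atom \<Rightarrow> 's \<Rightarrow> 's set" where
  "atom_sem (Assume e) \<sigma> = (if e \<sigma> then {\<sigma>} else {})"
| "atom_sem (Det f) \<sigma> = {f \<sigma>}"

definition dagger :: "('s \<Rightarrow> 's set) \<Rightarrow> 's set \<Rightarrow> 's set" where
  "dagger f S = (\<Union>\<sigma>\<in>S. f \<sigma>)"

fun sem :: "'s cmd \<Rightarrow> 's \<Rightarrow> 's set" where
  "sem Zero \<sigma> = {}"
| "sem One \<sigma> = {\<sigma>}"
| "sem (Seq C1 C2) \<sigma> = dagger (sem C2) (sem C1 \<sigma>)"
| "sem (Plus C1 C2) \<sigma> = sem C1 \<sigma> \<union> sem C2 \<sigma>"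
| "sem (Star C) \<sigma> = lfp (\<lambda>f. \<lambda>\<tau>. dagger f (sem C \<tau>) \<union> {\<tau>}) \<sigma>"
| "sem (Atm c) \<sigma> = atom_sem c \<sigma>"

type_synonym 's aassn = "'s \<Rightarrow> bool"

definition aneg :: "'s aassn \<Rightarrow> 's aassn" where
  "aneg Q = (\<lambda>\<sigma>. \<not> Q \<sigma>)"

definition sat_atomic :: "'s set \<Rightarrow> 's aassn \<Rightarrow> bool" where
  "sat_atomic S P \<longleftrightarrow> S \<noteq> {} \<and> (\<forall>\<sigma>\<in>S. P \<sigma>)"

datatype 's oassn =
    OTop
  | OBot
  | OTopPlus
  | OAtom "'s aassn"
  | OAnd "'s oassn" "'s oassn"
  | OImp "'s oassn" "'s oassn"
  | OPlus "'s oassn" "'s oassn"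

fun osat :: "'s set \<Rightarrow> 's oassn \<Rightarrow> bool" where
  "osat S OTop = True"
| "osat S OBot = False"
| "osat S OTopPlus = (S = {})"
| "osat S (OAtom P) = sat_atomic S P"
| "osat S (OAnd \<phi> \<psi>) = (osat S \<phi> \<and> osat S \<psi>)"
| "osat S (OImp \<phi> \<psi>) = (osat S \<phi> \<longrightarrow> osat S \<psi>)"
| "osat S (OPlus \<phi> \<psi>) = (\<exists>S1 S2. S = S1 \<union> S2 \<and> osat S1 \<phi> \<and> osat S2 \<psi>)"

definition ol_valid :: "'s oassn \<Rightarrow> 's cmd \<Rightarrow> 's oassn \<Rightarrow> bool" where
  "ol_valid \<phi> C \<psi> \<longleftrightarrow> (\<forall>S. osat S \<phi> \<longrightarrow> osat (dagger (sem C) S) \<psi>)"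

definition hoare_valid :: "'s aassn \<Rightarrow> 's cmd \<Rightarrow> 's aassn \<Rightarrow> bool" where
  "hoare_valid P C Q \<longleftrightarrow> (\<forall>\<sigma> \<tau>. P \<sigma> \<longrightarrow> \<tau> \<in> sem C \<sigma> \<longrightarrow> Q \<tau>)"

definition oentails :: "'s oassn \<Rightarrow> 's aassn \<Rightarrow> bool" where
  "oentails \<phi> P \<longleftrightarrow> (\<forall>S. osat S \<phi> \<longrightarrow> sat_atomic S P)"

definition osatisfiable :: "'s oassn \<Rightarrow> bool" where
  "osatisfiable \<phi> \<longleftrightarrow> (\<exists>S. osat S \<phi>)"

end

theory Submission
  imports Defs
begin

(* A counterexample to the Hoare triple is a P-state sigma with an outcome violating Q.
   The point assertion "the state is sigma" captures it: it entails P, is satisfiable,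
   and its image under C contains a (not Q)-state, which is all that (not Q) + T demands.
   Conversely, every set satisfying such a phi consists of P-states, so a
   (not Q)-outcome of one of them refutes the triple. *)

lemma mem_dagger_iff: "\<tau> \<in> dagger f S \<longleftrightarrow> (\<exists>\<sigma>\<in>S. \<tau> \<in> f \<sigma>)"
  by (simp add: dagger_def)

lemma dagger_singleton [simp]: "dagger f {\<sigma>} = f \<sigma>"
  by (simp add: dagger_def)

lemma osat_OPlus_OAtom_OTop_iff: "osat S (OPlus (OAtom P) OTop) \<longleftrightarrow> (\<exists>\<tau>\<in>S. P \<tau>)"
proof
  assume "osat S (OPlus (OAtom P) OTop)"
  then obtain S1 S2 where "S = S1 \<union> S2" "sat_atomic S1 P" by auto
  then show "\<exists>\<tau>\<in>S. P \<tau>" by (auto simp: sat_atomic_def)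
next
  assume "\<exists>\<tau>\<in>S. P \<tau>"
  then obtain \<tau> where "\<tau> \<in> S" "P \<tau>" by blast
  then have "S = {\<tau>} \<union> S" "osat {\<tau>} (OAtom P)" by (auto simp: sat_atomic_def)
  then show "osat S (OPlus (OAtom P) OTop)" using osat.simps(1,7) by metis
qed

lemma osat_point_iff: "osat S (OAtom (\<lambda>x. x = \<sigma>)) \<longleftrightarrow> S = {\<sigma>}"
  by (auto simp: sat_atomic_def)

lemma oentails_point_iff: "oentails (OAtom (\<lambda>x. x = \<sigma>)) P \<longleftrightarrow> P \<sigma>"
  by (auto simp: oentails_def osat_point_iff sat_atomic_def)

lemma osatisfiable_point: "osatisfiable (OAtom (\<lambda>x. x = \<sigma>))"
  unfolding osatisfiable_def osat_point_iff by blast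

lemma ol_valid_point_iff: "ol_valid (OAtom (\<lambda>x. x = \<sigma>)) C \<psi> \<longleftrightarrow> osat (sem C \<sigma>) \<psi>"
  unfolding ol_valid_def osat_point_iff by simp

lemma oentails_osat_mem:
  assumes "oentails \<phi> P" and "osat S \<phi>" and "\<sigma> \<in> S"
  shows "P \<sigma>"
  using assms by (auto simp: oentails_def sat_atomic_def)

theorem corollary5p7:
  fixes C :: "'s cmd" and P Q :: "'s aassn"
  shows "\<not> hoare_valid P C Q \<longleftrightarrow>
    (\<exists>\<phi>. oentails \<phi> P \<and> osatisfiable \<phi> \<and> ol_valid \<phi> C (OPlus (OAtom (aneg Q)) OTop))"
proof
  assume "\<not> hoare_valid P C Q"
  then obtain \<sigma> \<tau> where "P \<sigma>" "\<tau> \<in> sem C \<sigma>" "\<not> Q \<tau>"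
    unfolding hoare_valid_def by blast
  have "oentails (OAtom (\<lambda>x. x = \<sigma>)) P"
    using \<open>P \<sigma>\<close> by (simp only: oentails_point_iff)
  moreover have "ol_valid (OAtom (\<lambda>x. x = \<sigma>)) C (OPlus (OAtom (aneg Q)) OTop)"
    unfolding ol_valid_point_iff osat_OPlus_OAtom_OTop_iff aneg_def
    using \<open>\<tau> \<in> sem C \<sigma>\<close> \<open>\<not> Q \<tau>\<close> by blast
  ultimately show "\<exists>\<phi>. oentails \<phi> P \<and> osatisfiable \<phi> \<and>
      ol_valid \<phi> C (OPlus (OAtom (aneg Q)) OTop)"
    using osatisfiable_point by (intro exI[of _ "OAtom (\<lambda>x. x = \<sigma>)"] conjI)
next
  assume "\<exists>\<phi>. oentails \<phi> P \<and> osatisfiable \<phi> \<and> ol_valid \<phi> C (OPlus (OAtom (aneg Q)) OTop)"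
  then obtain \<phi> S where entails: "oentails \<phi> P" and "osat S \<phi>"
    and valid: "ol_valid \<phi> C (OPlus (OAtom (aneg Q)) OTop)"
    unfolding osatisfiable_def by blast
  have "osat (dagger (sem C) S) (OPlus (OAtom (aneg Q)) OTop)"
    using valid \<open>osat S \<phi>\<close> unfolding ol_valid_def by blast
  then obtain \<tau> where "\<tau> \<in> dagger (sem C) S" "\<not> Q \<tau>"
    unfolding osat_OPlus_OAtom_OTop_iff aneg_def by blast
  then obtain \<sigma> where "\<sigma> \<in> S" "\<tau> \<in> sem C \<sigma>"
    unfolding mem_dagger_iff by blast
  then show "\<not> hoare_valid P C Q"
    using oentails_osat_mem[OF entails \<open>osat S \<phi>\<close>] \<open>\<not> Q \<tau>\<close>
    unfolding hoare_valid_def by blast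
qed

end
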